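(* Let $C_n^\sigma=(C_n,\sigma)$, $n\ge 3$, be a compatible signed cycle. Then $\dim(C_n^\sigma)=1$ if and only if there exists a vertex $u$ such that $d^{\pm}(u)=0$ (i.e. the two edges at $u$ have opposite signs) and, for every $k\in\{1,2,\dots,\lfloor n/2\rfloor\}$ and all distinct $v,w\in N_k(u)$, one has $\sigma(uv)\neq\sigma(uw)$.
   Context: A signed graph $\Sigma=(G,\sigma)$ consists of a finite simple connected graph $G=(V,E)$ and a signature $\sigma:E\to\{+1,-1\}$. For vertices $u,v$, $d(u,v)$ denotes the usual distance in $G$; the sign of a path $P$ is $\sigma(P)=\prod_{e\in P}\sigma(e)$. Set $\sigma_{\max}(uv)=-1$ if every shortest $u$–$v$ path has sign $-1$, and $\sigma_{\max}(uv)=+1$ otherwise; set $\sigma_{\min}(uv)=+1$ if every shortest $u$–$v$ path has sign $+1$, and $\sigma_{\min}(uv)=-1$ otherwise. $\Sigma$ is (distance) compatible if $\sigma_{\max}(uv)d(u,v)=\sigma_{\min}(uv)d(u,v)$ for all vertices $u,v$; in that case the signed distance is $d_\Sigma(u,v)=\sigma_{\max}(uv)\,d(u,v)$, and $\sigma(uv)$ denotes the common value $\sigma_{\max}(uv)=\sigma_{\min}(uv)$ (for an edge $uv$ this is its edge sign). $d^+(v)$ and $d^-(v)$ are the numbers of positive and negative edges at $v$, and $d^\pm(v)=d^+(v)-d^-(v)$ is the net-degree. The open $k$-neighbourhood of $v$ is $N_k(v)=\{u: d_\Sigma(u,v)=\pm k\}$, i.e. the vertices at distance $k$ from $v$. For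 a compatible $\Sigma$ and an ordered subset $W=(w_1,\dots,w_k)$ of $V$, the metric representation of $v\in V$ is $r_\Sigma(v|W)=(d_\Sigma(v,w_1),\dots,d_\Sigma(v,w_k))$. $W$ is a resolving set of $\Sigma$ if $r_\Sigma(u|W)\neq r_\Sigma(v|W)$ for all distinct $u,v\in V$; a basis is a resolving set of minimum cardinality, and that cardinality is the metric dimension $\dim(\Sigma)$. *)

theory Defs
  imports Main
begin

text \<open>A signed graph is given by a vertex set V, a symmetric adjacency relation E
  and a signature sg, where sg u v is the sign (+1 or -1) of the edge uv.\<close>

definition is_walk :: "'a set \<Rightarrow> ('a \<Rightarrow> 'a \<Rightarrow> bool) \<Rightarrow> 'a \<Rightarrow> 'a \<Rightarrow> 'a list \<Rightarrow> bool" where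
  "is_walk V E u v xs \<longleftrightarrow> xs \<noteq> [] \<and> hd xs = u \<and> last xs = v \<and> set xs \<subseteq> V \<and>
     (\<forall>i. Suc i < length xs \<longrightarrow> E (xs ! i) (xs ! Suc i))"

definition walk_sign :: "('a \<Rightarrow> 'a \<Rightarrow> int) \<Rightarrow> 'a list \<Rightarrow> int" where
  "walk_sign sg xs = prod_list (map (\<lambda>(a, b). sg a b) (zip xs (tl xs)))"

definition gdist :: "'a set \<Rightarrow> ('a \<Rightarrow> 'a \<Rightarrow> bool) \<Rightarrow> 'a \<Rightarrow> 'a \<Rightarrow> nat" where
  "gdist V E u v = (LEAST k. \<exists>xs. is_walk V E u v xs \<and> length xs = Suc k)"

definition shortest_paths :: "'a set \<Rightarrow> ('a \<Rightarrow> 'a \<Rightarrow> bool) \<Rightarrow> 'a \<Rightarrow> 'a \<Rightarrow> 'a list set" where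
  "shortest_paths V E u v = {xs. is_walk V E u v xs \<and> length xs = Suc (gdist V E u v)}"

definition sigma_max :: "'a set \<Rightarrow> ('a \<Rightarrow> 'a \<Rightarrow> bool) \<Rightarrow> ('a \<Rightarrow> 'a \<Rightarrow> int) \<Rightarrow> 'a \<Rightarrow> 'a \<Rightarrow> int" where
  "sigma_max V E sg u v = (if \<forall>p\<in>shortest_paths V E u v. walk_sign sg p = -1 then -1 else 1)"

definition sigma_min :: "'a set \<Rightarrow> ('a \<Rightarrow> 'a \<Rightarrow> bool) \<Rightarrow> ('a \<Rightarrow> 'a \<Rightarrow> int) \<Rightarrow> 'a \<Rightarrow> 'a \<Rightarrow> int" where
  "sigma_min V E sg u v = (if \<forall>p\<in>shortest_paths V E u v. walk_sign sg p = 1 then 1 else -1)"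

definition compatible :: "'a set \<Rightarrow> ('a \<Rightarrow> 'a \<Rightarrow> bool) \<Rightarrow> ('a \<Rightarrow> 'a \<Rightarrow> int) \<Rightarrow> bool" where
  "compatible V E sg \<longleftrightarrow> (\<forall>u\<in>V. \<forall>v\<in>V.
     sigma_max V E sg u v * int (gdist V E u v) = sigma_min V E sg u v * int (gdist V E u v))"

text \<open>Signed distance; for a compatible signed graph sigma_max u v is the common value sigma(uv).\<close>
definition signed_dist :: "'a set \<Rightarrow> ('a \<Rightarrow> 'a \<Rightarrow> bool) \<Rightarrow> ('a \<Rightarrow> 'a \<Rightarrow> int) \<Rightarrow> 'a \<Rightarrow> 'a \<Rightarrow> int" where
  "signed_dist V E sg u v = sigma_max V E sg u v * int (gdist V E u v)"

definition net_degree :: "'a set \<Rightarrow> ('a \<Rightarrow> 'a \<Rightarrow> bool) \<Rightarrow> ('a \<Rightarrow> 'a \<Rightarrow> int) \<Rightarrow> 'a \<Rightarrow> int" where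
  "net_degree V E sg v = int (card {w\<in>V. E v w \<and> sg v w = 1}) - int (card {w\<in>V. E v w \<and> sg v w = -1})"

definition nbhd :: "'a set \<Rightarrow> ('a \<Rightarrow> 'a \<Rightarrow> bool) \<Rightarrow> ('a \<Rightarrow> 'a \<Rightarrow> int) \<Rightarrow> nat \<Rightarrow> 'a \<Rightarrow> 'a set" where
  "nbhd V E sg k v = {u\<in>V. signed_dist V E sg u v = int k \<or> signed_dist V E sg u v = - int k}"

definition metric_rep :: "'a set \<Rightarrow> ('a \<Rightarrow> 'a \<Rightarrow> bool) \<Rightarrow> ('a \<Rightarrow> 'a \<Rightarrow> int) \<Rightarrow> 'a list \<Rightarrow> 'a \<Rightarrow> int list" where
  "metric_rep V E sg W v = map (\<lambda>w. signed_dist V E sg v w) W"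

definition resolving :: "'a set \<Rightarrow> ('a \<Rightarrow> 'a \<Rightarrow> bool) \<Rightarrow> ('a \<Rightarrow> 'a \<Rightarrow> int) \<Rightarrow> 'a list \<Rightarrow> bool" where
  "resolving V E sg W \<longleftrightarrow> distinct W \<and> set W \<subseteq> V \<and>
     (\<forall>u\<in>V. \<forall>v\<in>V. u \<noteq> v \<longrightarrow> metric_rep V E sg W u \<noteq> metric_rep V E sg W v)"

definition metric_dim :: "'a set \<Rightarrow> ('a \<Rightarrow> 'a \<Rightarrow> bool) \<Rightarrow> ('a \<Rightarrow> 'a \<Rightarrow> int) \<Rightarrow> nat" where
  "metric_dim V E sg = (LEAST k. \<exists>W. resolving V E sg W \<and> length W = k)"

definition cycle_adj :: "nat \<Rightarrow> nat \<Rightarrow> nat \<Rightarrow> bool" where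
  "cycle_adj n i j \<longleftrightarrow> i < n \<and> j < n \<and> (j = Suc i mod n \<or> i = Suc j mod n)"

end

theory Submission imports Defs begin

text \<open>A singleton [u] resolves a graph exactly when the signed distances to u separate
  vertices: their absolute values separate the distance levels N_k(u), and their signs
  must separate the vertices inside each level, which is the stated neighbourhood
  condition. On a cycle the level N_1(u) consists of the two neighbours of u, so the
  condition at k = 1 already forces the two edges at u to have opposite signs, i.e.
  net degree 0.\<close>

lemma walk_sign_Nil [simp]: "walk_sign sg [] = 1"
  by (simp add: walk_sign_def)

lemma walk_sign_singleton [simp]: "walk_sign sg [a] = 1"
  by (simp add: walk_sign_def)

lemma walk_sign_Cons_Cons [simp]: "walk_sign sg (a # b # xs) = sg a b * walk_sign sg (b # xs)"
  by (simp add: walk_sign_def)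

lemma walk_sign_snoc: "ys \<noteq> [] \<Longrightarrow> walk_sign sg (ys @ [a]) = walk_sign sg ys * sg (last ys) a"
  by (induction ys rule: induct_list012) auto

lemma gdist_le_walk: "is_walk V E u v xs \<Longrightarrow> gdist V E u v \<le> length xs - 1"
  unfolding gdist_def by (rule Least_le) (metis Suc_diff_1 is_walk_def length_greater_0_conv)

lemma shortest_path_exists:
  "is_walk V E u v xs \<Longrightarrow> \<exists>ys. is_walk V E u v ys \<and> length ys = Suc (gdist V E u v)"
  unfolding gdist_def by (rule LeastI_ex) (metis Suc_diff_1 is_walk_def length_greater_0_conv)

lemma gdist_eq_0_iff:
  assumes "u \<in> V" "is_walk V E u v xs"
  shows "gdist V E u v = 0 \<longleftrightarrow> u = v"
proof
  assume "gdist V E u v = 0"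
  then show "u = v"
    using shortest_path_exists[OF assms(2)] by (auto simp: is_walk_def length_Suc_conv)
next
  assume "u = v"
  then show "gdist V E u v = 0"
    using gdist_le_walk[of V E u u "[u]"] assms(1) by (simp add: is_walk_def)
qed

lemma signed_dist_eq_iff:
  "signed_dist V E sg v u = signed_dist V E sg w u \<longleftrightarrow>
     gdist V E v u = gdist V E w u \<and> (gdist V E v u = 0 \<or> sigma_max V E sg v u = sigma_max V E sg w u)"
  by (auto simp: signed_dist_def sigma_max_def)

lemma mem_nbhd_iff: "x \<in> nbhd V E sg k u \<longleftrightarrow> x \<in> V \<and> gdist V E x u = k"
  by (auto simp: nbhd_def signed_dist_def sigma_max_def)

lemma net_degree_eq_0_iff_two_neighbours:
  assumes "{w \<in> V. E u w} = {a, b}" "a \<noteq> b"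
    and "sg u a = 1 \<or> sg u a = -1" "sg u b = 1 \<or> sg u b = -1"
  shows "net_degree V E sg u = 0 \<longleftrightarrow> sg u a \<noteq> sg u b"
proof -
  have "{w \<in> V. E u w \<and> sg u w = c} =
      (if sg u a = c then {a} else {}) \<union> (if sg u b = c then {b} else {})" for c
    using assms(1) by auto
  then show ?thesis
    unfolding net_degree_def using assms(2-4) by (elim disjE) auto
qed

locale sym_graph =
  fixes V :: "'a set" and E :: "'a \<Rightarrow> 'a \<Rightarrow> bool"
  assumes adj_sym: "E a b \<Longrightarrow> E b a"
begin

lemma is_walk_rev: "is_walk V E u v xs \<Longrightarrow> is_walk V E v u (rev xs)"
  unfolding is_walk_def
proof (intro conjI allI impI; (elim conjE)?)
  assume "xs \<noteq> []" "hd xs = u" "last xs = v" "set xs \<subseteq> V"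
  then show "rev xs \<noteq> []" "hd (rev xs) = v" "last (rev xs) = u" "set (rev xs) \<subseteq> V"
    by (auto simp: hd_rev last_rev)
next
  fix i assume steps: "\<forall>i. Suc i < length xs \<longrightarrow> E (xs ! i) (xs ! Suc i)"
    and i: "Suc i < length (rev xs)"
  define j where "j = length xs - Suc (Suc i)"
  have "rev xs ! i = xs ! Suc j" "rev xs ! Suc i = xs ! j"
    using i by (auto simp: rev_nth j_def Suc_diff_Suc)
  moreover have "E (xs ! j) (xs ! Suc j)"
    using steps i by (auto simp: j_def)
  ultimately show "E (rev xs ! i) (rev xs ! Suc i)"
    using adj_sym by metis
qed

lemma gdist_sym: "gdist V E u v = gdist V E v u"
proof -
  have "(\<exists>xs. is_walk V E u v xs \<and> length xs = k) \<longleftrightarrow> (\<exists>xs. is_walk V E v u xs \<and> length xs = k)" for k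
    by (metis is_walk_rev length_rev rev_rev_ident)
  then show ?thesis
    unfolding gdist_def by simp
qed

end

locale signed_graph = sym_graph V E for V :: "'a set" and E +
  fixes sg :: "'a \<Rightarrow> 'a \<Rightarrow> int"
  assumes sign_sym: "E a b \<Longrightarrow> sg a b = sg b a"
    and sign_cases: "E a b \<Longrightarrow> sg a b = 1 \<or> sg a b = -1"
begin

lemma walk_sign_rev: "is_walk V E u v xs \<Longrightarrow> walk_sign sg (rev xs) = walk_sign sg xs"
proof (induction xs arbitrary: u rule: induct_list012)
  case (3 x y zs)
  then have "is_walk V E y v (y # zs)" "E x y"
    by (auto simp: is_walk_def nth_Cons' split: if_splits)
  with 3 have "walk_sign sg (rev (y # zs)) = walk_sign sg (y # zs)"
    by blast
  moreover have "last (rev (y # zs)) = y"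
    by (simp add: last_rev)
  ultimately show ?case
    using walk_sign_snoc[of "rev (y # zs)" sg x] sign_sym[OF \<open>E x y\<close>] by simp
qed simp_all

lemma shortest_paths_sym: "shortest_paths V E v u = rev ` shortest_paths V E u v"
proof
  have rev_shortest: "rev ` shortest_paths V E x y \<subseteq> shortest_paths V E y x" for x y
    using is_walk_rev gdist_sym by (auto simp: shortest_paths_def)
  then show "rev ` shortest_paths V E u v \<subseteq> shortest_paths V E v u" .
  show "shortest_paths V E v u \<subseteq> rev ` shortest_paths V E u v"
  proof
    fix p assume "p \<in> shortest_paths V E v u"
    then have "rev p \<in> shortest_paths V E u v"
      using rev_shortest[of v u] by blast
    then show "p \<in> rev ` shortest_paths V E u v"
      by (rule rev_image_eqI) simp
  qed
qed

lemma sigma_max_sym: "sigma_max V E sg u v = sigma_max V E sg v u"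
  unfolding sigma_max_def shortest_paths_sym[of v u]
  by (auto simp: shortest_paths_def walk_sign_rev)

lemma edge_gdist_sigma_max:
  assumes "E u v" "u \<noteq> v" "u \<in> V" "v \<in> V"
  shows "gdist V E u v = 1" "sigma_max V E sg u v = sg u v"
proof -
  have walk: "is_walk V E u v [u, v]"
    using assms by (auto simp: is_walk_def nth_Cons split: nat.splits)
  show dist: "gdist V E u v = 1"
    using gdist_le_walk[OF walk] gdist_eq_0_iff[OF assms(3) walk] assms(2) by simp
  have "shortest_paths V E u v = {[u, v]}"
    using walk by (auto simp: shortest_paths_def dist is_walk_def length_Suc_conv)
  then show "sigma_max V E sg u v = sg u v"
    using sign_cases[OF assms(1)] by (auto simp: sigma_max_def)
qed

definition nbhd_signs_distinct :: "nat \<Rightarrow> 'a \<Rightarrow> bool" where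
  "nbhd_signs_distinct D u \<longleftrightarrow> (\<forall>k\<in>{1..D}. \<forall>v\<in>nbhd V E sg k u. \<forall>w\<in>nbhd V E sg k u.
     v \<noteq> w \<longrightarrow> sigma_max V E sg u v \<noteq> sigma_max V E sg u w)"

lemma resolving_singleton_iff:
  assumes connected: "\<And>x y. x \<in> V \<Longrightarrow> y \<in> V \<Longrightarrow> \<exists>xs. is_walk V E x y xs"
    and bounded: "\<And>x. x \<in> V \<Longrightarrow> gdist V E x u \<le> D"
    and "u \<in> V"
  shows "resolving V E sg [u] \<longleftrightarrow> nbhd_signs_distinct D u"
proof -
  have level_0: "gdist V E v u = 0 \<longleftrightarrow> v = u" if v: "v \<in> V" for v
  proof -
    obtain xs where "is_walk V E v u xs"
      using connected[OF v \<open>u \<in> V\<close>] by blast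
    then show ?thesis
      by (rule gdist_eq_0_iff[OF v])
  qed
  have collision: "signed_dist V E sg v u = signed_dist V E sg w u \<longleftrightarrow>
      (\<exists>k\<in>{1..D}. v \<in> nbhd V E sg k u \<and> w \<in> nbhd V E sg k u \<and>
         sigma_max V E sg u v = sigma_max V E sg u w)"
    if "v \<in> V" "w \<in> V" "v \<noteq> w" for v w
  proof -
    have "gdist V E v u = gdist V E w u \<Longrightarrow> gdist V E v u \<noteq> 0"
      using level_0 that by metis
    then show ?thesis
      unfolding signed_dist_eq_iff mem_nbhd_iff sigma_max_sym[of u]
      using bounded[OF \<open>v \<in> V\<close>] that by auto
  qed
  have "resolving V E sg [u] \<longleftrightarrow>
      (\<forall>v\<in>V. \<forall>w\<in>V. v \<noteq> w \<longrightarrow> signed_dist V E sg v u \<noteq> signed_dist V E sg w u)"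
    using \<open>u \<in> V\<close> by (simp add: resolving_def metric_rep_def)
  also have "\<dots> \<longleftrightarrow> nbhd_signs_distinct D u"
    unfolding nbhd_signs_distinct_def using collision by (auto simp: mem_nbhd_iff)
  finally show ?thesis .
qed

lemma metric_dim_eq_1_iff:
  assumes connected: "\<And>x y. x \<in> V \<Longrightarrow> y \<in> V \<Longrightarrow> \<exists>xs. is_walk V E x y xs"
    and "finite V" "a \<in> V" "b \<in> V" "a \<noteq> b"
  shows "metric_dim V E sg = 1 \<longleftrightarrow> (\<exists>u. resolving V E sg [u])"
proof -
  have no_empty_basis: "resolving V E sg W \<Longrightarrow> length W \<ge> 1" for W
    using assms(3-5) by (cases W) (auto simp: resolving_def metric_rep_def)
  obtain vs where vs: "set vs = V" "distinct vs"
    using finite_distinct_list[OF \<open>finite V\<close>] by blast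
  have "resolving V E sg vs"
    unfolding resolving_def
  proof (intro conjI ballI impI)
    fix v w assume "v \<in> V" "w \<in> V" "v \<noteq> w"
    then have "gdist V E v v = 0" "gdist V E w v \<noteq> 0"
      using connected gdist_eq_0_iff by metis+
    then have "signed_dist V E sg v v \<noteq> signed_dist V E sg w v"
      by (simp add: signed_dist_eq_iff)
    then show "metric_rep V E sg vs v \<noteq> metric_rep V E sg vs w"
      using vs(1) \<open>v \<in> V\<close> by (auto simp: metric_rep_def in_set_conv_nth)
  qed (use vs in auto)
  have "\<exists>W. resolving V E sg W \<and> length W = metric_dim V E sg"
    unfolding metric_dim_def by (rule LeastI_ex) (use \<open>resolving V E sg vs\<close> in blast)
  then have "metric_dim V E sg = 1 \<Longrightarrow> \<exists>u. resolving V E sg [u]"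
    by (metis One_nat_def length_0_conv length_Suc_conv)
  moreover have "metric_dim V E sg = 1" if "resolving V E sg [u]" for u
    unfolding metric_dim_def
  proof (rule Least_equality)
    show "\<exists>W. resolving V E sg W \<and> length W = 1"
      using that by (intro exI[of _ "[u]"]) simp
  qed (use no_empty_basis in blast)
  ultimately show ?thesis
    by blast
qed

lemma nbhd_signs_distinct_neighbours:
  assumes "nbhd_signs_distinct D u" "D \<ge> 1" "u \<in> V" "a \<in> V" "b \<in> V" "E u a" "E u b"
    "a \<noteq> b" "a \<noteq> u" "b \<noteq> u"
  shows "sg u a \<noteq> sg u b"
proof -
  have "a \<in> nbhd V E sg 1 u" "b \<in> nbhd V E sg 1 u"
    using assms(3-10) adj_sym edge_gdist_sigma_max(1) by (auto simp: mem_nbhd_iff)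
  moreover have "(1::nat) \<in> {1..D}"
    using assms(2) by simp
  ultimately have "sigma_max V E sg u a \<noteq> sigma_max V E sg u b"
    using assms(1,8) unfolding nbhd_signs_distinct_def by blast
  then show ?thesis
    using assms(3-7,9,10) edge_gdist_sigma_max(2) by metis
qed

end

lemma cycle_adj_sym: "cycle_adj n a b \<Longrightarrow> cycle_adj n b a"
  by (auto simp: cycle_adj_def)

lemma Suc_mod_eq_iff:
  assumes "u < n" "w < n"
  shows "u = Suc w mod n \<longleftrightarrow> w = (u + n - 1) mod n"
  using assms by (cases "u = 0"; cases "w = n - 1") (auto simp: mod_if)

lemma cycle_neighbours:
  assumes "u < n"
  shows "{w \<in> {..<n}. cycle_adj n u w} = {Suc u mod n, (u + n - 1) mod n}"
  using assms Suc_mod_eq_iff[OF assms] by (auto simp: cycle_adj_def)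

lemma cycle_neighbours_distinct:
  assumes "n \<ge> 3" "u < n"
  shows "Suc u mod n \<noteq> (u + n - 1) mod n" "Suc u mod n \<noteq> u" "(u + n - 1) mod n \<noteq> u"
  using assms by (cases "u = 0"; cases "u = n - 1"; auto simp: mod_if)+

lemma cycle_walk_forward:
  assumes "a < n"
  shows "is_walk {..<n} (cycle_adj n) a ((a + j) mod n) (map (\<lambda>t. (a + t) mod n) [0..<Suc j])"
  using assms unfolding is_walk_def
  by (auto simp: cycle_adj_def hd_map last_map mod_Suc_eq simp del: upt_Suc)

lemma cycle_short_walk:
  assumes "u < n" "v < n"
  shows "\<exists>xs. is_walk {..<n} (cycle_adj n) v u xs \<and> length xs \<le> Suc (n div 2)"
proof -
  interpret sym_graph "{..<n}" "cycle_adj n"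
    by unfold_locales (rule cycle_adj_sym)
  define j where "j = (u + n - v) mod n"
  have "j < n"
    using assms by (simp add: j_def)
  have "(v + j) mod n = (u + n) mod n"
    using assms by (simp add: j_def mod_add_right_eq)
  then have forward: "(v + j) mod n = u"
    using assms by simp
  have "(u + (n - j)) mod n = (v + j + (n - j)) mod n"
    by (simp add: forward[symmetric] mod_add_left_eq)
  then have backward: "(u + (n - j)) mod n = v"
    using assms \<open>j < n\<close> by simp
  show ?thesis
  proof (cases "j \<le> n div 2")
    case True
    then show ?thesis
      using cycle_walk_forward[OF assms(2), of j] forward by (intro exI) auto
  next
    case False
    then show ?thesis
      using is_walk_rev[OF cycle_walk_forward[OF assms(1), of "n - j"]] backward
      by (intro exI) auto
  qed
qed

lemma cycle_gdist_le:
  assumes "u < n" "v < n"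
  shows "gdist {..<n} (cycle_adj n) v u \<le> n div 2"
  using cycle_short_walk[OF assms] gdist_le_walk by fastforce

locale signed_cycle = signed_graph "{..<n}" "cycle_adj n" sg for n :: nat and sg +
  assumes cycle_length: "n \<ge> 3"
begin

lemma cycle_connected: "x \<in> {..<n} \<Longrightarrow> y \<in> {..<n} \<Longrightarrow> \<exists>xs. is_walk {..<n} (cycle_adj n) x y xs"
  using cycle_short_walk by blast

lemma cycle_resolving_singleton_iff:
  "resolving {..<n} (cycle_adj n) sg [u] \<longleftrightarrow> u < n \<and> nbhd_signs_distinct (n div 2) u"
proof (cases "u < n")
  case True
  then show ?thesis
    using resolving_singleton_iff[OF cycle_connected cycle_gdist_le] by simp
qed (simp add: resolving_def)

lemma cycle_metric_dim_eq_1_iff: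
  "metric_dim {..<n} (cycle_adj n) sg = 1 \<longleftrightarrow> (\<exists>u<n. nbhd_signs_distinct (n div 2) u)"
proof -
  have "metric_dim {..<n} (cycle_adj n) sg = 1 \<longleftrightarrow> (\<exists>u. resolving {..<n} (cycle_adj n) sg [u])"
    by (rule metric_dim_eq_1_iff[OF cycle_connected, of 0 1]) (use cycle_length in auto)
  then show ?thesis
    unfolding cycle_resolving_singleton_iff by blast
qed

lemma cycle_net_degree_eq_0_if_nbhd_signs_distinct:
  assumes "u < n" "nbhd_signs_distinct (n div 2) u"
  shows "net_degree {..<n} (cycle_adj n) sg u = 0"
proof -
  define a where "a = Suc u mod n"
  define b where "b = (u + n - 1) mod n"
  have neighbours: "{w \<in> {..<n}. cycle_adj n u w} = {a, b}"
    using cycle_neighbours assms(1) by (simp add: a_def b_def)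
  then have "a < n" "b < n" and adj: "cycle_adj n u a" "cycle_adj n u b"
    by auto
  moreover have "a \<noteq> b" "a \<noteq> u" "b \<noteq> u"
    using cycle_neighbours_distinct cycle_length assms(1) by (simp_all add: a_def b_def)
  ultimately have "sg u a \<noteq> sg u b"
    using nbhd_signs_distinct_neighbours[OF assms(2)] assms(1) cycle_length by simp
  then show ?thesis
    using net_degree_eq_0_iff_two_neighbours[of "{..<n}" "cycle_adj n" u a b sg, OF neighbours]
      \<open>a \<noteq> b\<close> sign_cases[OF adj(1)] sign_cases[OF adj(2)]
    by blast
qed

end

theorem theorem2p8:
  fixes n :: nat and sg :: "nat \<Rightarrow> nat \<Rightarrow> int"
  assumes "n \<ge> 3"
    and "\<forall>i j. cycle_adj n i j \<longrightarrow> sg i j = sg j i \<and> (sg i j = 1 \<or> sg i j = -1)"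
    and "compatible {..<n} (cycle_adj n) sg"
  shows "metric_dim {..<n} (cycle_adj n) sg = 1 \<longleftrightarrow>
    (\<exists>u\<in>{..<n}. net_degree {..<n} (cycle_adj n) sg u = 0 \<and>
       (\<forall>k\<in>{1..n div 2}. \<forall>v\<in>nbhd {..<n} (cycle_adj n) sg k u. \<forall>w\<in>nbhd {..<n} (cycle_adj n) sg k u.
          v \<noteq> w \<longrightarrow> sigma_max {..<n} (cycle_adj n) sg u v \<noteq> sigma_max {..<n} (cycle_adj n) sg u w))"
proof -
  interpret signed_cycle n sg
    using assms(1,2) by unfold_locales (auto intro: cycle_adj_sym)
  show ?thesis
    unfolding cycle_metric_dim_eq_1_iff nbhd_signs_distinct_def[symmetric]
    using cycle_net_degree_eq_0_if_nbhd_signs_distinct by auto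
qed

end
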